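(* For every $\alpha\in(0,1)$, every randomized online algorithm for non-clairvoyant dynamic bin packing that makes at most $\alpha n$ migrations in expectation on every instance with $n$ items has competitive ratio at least $\frac14\left\lfloor \frac{1}{4\alpha}\right\rfloor$ with respect to the total active time objective.
   Context: Dynamic bin packing: bins have capacity $1$. Items $i=1,\dots,n$ arrive online at times $a_i\ge0$ with size $s_i\in[0,1]$ and duration $d_i>0$; item $i$ is present during $[a_i,a_i+d_i)$. Non-clairvoyant: at arrival only the size is revealed, not the duration. On arrival the item must be placed into an open bin with enough remaining capacity, or into a newly opened bin. A migration moves an already placed item to another bin; migrations are counted by number of moves. A bin is open while it contains an item. The cost (total active time) of an algorithm on instance $I$ is $\int_0^\infty (\text{number of open bins at time } t)\,dt$. $\mathrm{OPT}(I)=\int_0^\infty \mathrm{OPT}_t\,dt$, where $\mathrm{OPT}_t$ is the minimum number of unit bins needed to pack the items present at time $t$ (the optimal offline policy that knows the instance and may repack arbitrarily at any time). A randomized algorithm has competitive ratio at least $\gamma$ if for every $\beta<\gamma$ there is an instance $I$ with $\mathbb{E}[\mathrm{cost}(I)] > \beta\,\mathrm{OPT}(I)$. *)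

theory Defs
  imports "HOL-Probability.Probability"
begin

type_synonym item = "real \<times> real \<times> real"
type_synonym bp_instance = "item list"
(* A deterministic packing policy: instance, time t, item index \<mapsto> bin label at time t.
   Its behaviour at time t is required (see online_packing_alg) to depend only on the
   information observable up to time t. *)
type_synonym bp_alg = "bp_instance \<Rightarrow> real \<Rightarrow> nat \<Rightarrow> nat"

definition arr :: "item \<Rightarrow> real" where "arr x = fst x"
definition isize :: "item \<Rightarrow> real" where "isize x = fst (snd x)"
definition dur :: "item \<Rightarrow> real" where "dur x = snd (snd x)"

definition valid_instance :: "bp_instance \<Rightarrow> bool" where
  "valid_instance I \<longleftrightarrow>
     (\<forall>x\<in>set I. 0 \<le> arr x \<and> 0 \<le> isize x \<and> isize x \<le> 1 \<and> 0 < dur x) \<and> sorted (map arr I)"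

definition present :: "bp_instance \<Rightarrow> nat \<Rightarrow> real \<Rightarrow> bool" where
  "present I i t \<longleftrightarrow> i < length I \<and> arr (I!i) \<le> t \<and> t < arr (I!i) + dur (I!i)"

(* Durations of present items are hidden. *)
definition view :: "bp_instance \<Rightarrow> real \<Rightarrow> nat \<Rightarrow> (real \<times> real \<times> real option) option" where
  "view I t i = (if i < length I \<and> arr (I!i) \<le> t
      then Some (arr (I!i), isize (I!i),
                 if arr (I!i) + dur (I!i) \<le> t then Some (arr (I!i) + dur (I!i)) else None)
      else None)"

(* Deterministic non-clairvoyant online algorithm (with migrations allowed at any time):
   online/non-clairvoyant, capacity-feasible, and each item's bin is right-locally constant
   while it is present (a decision persists for positive time). *)
definition online_packing_alg :: "bp_alg \<Rightarrow> bool" where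
  "online_packing_alg A \<longleftrightarrow>
     (\<forall>I I' t i. valid_instance I \<longrightarrow> valid_instance I' \<longrightarrow> view I t = view I' t \<longrightarrow>
         present I i t \<longrightarrow> A I t i = A I' t i) \<and>
     (\<forall>I t b. valid_instance I \<longrightarrow>
         (\<Sum>i\<in>{i. present I i t \<and> A I t i = b}. isize (I!i)) \<le> 1) \<and>
     (\<forall>I i t. valid_instance I \<longrightarrow> present I i t \<longrightarrow>
         (\<exists>\<epsilon>>0. \<forall>u. t \<le> u \<longrightarrow> u < t + \<epsilon> \<longrightarrow> present I i u \<longrightarrow> A I u i = A I t i))"

definition migration_times :: "bp_alg \<Rightarrow> bp_instance \<Rightarrow> nat \<Rightarrow> real set" where
  "migration_times A I i = {t. arr (I!i) < t \<and> t < arr (I!i) + dur (I!i) \<and>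
      (\<forall>\<epsilon>>0. \<exists>u. t - \<epsilon> < u \<and> u < t \<and> A I u i \<noteq> A I t i)}"

definition item_migrations :: "bp_alg \<Rightarrow> bp_instance \<Rightarrow> nat \<Rightarrow> ennreal" where
  "item_migrations A I i =
     (if finite (migration_times A I i) then of_nat (card (migration_times A I i)) else \<infinity>)"

definition migrations :: "bp_alg \<Rightarrow> bp_instance \<Rightarrow> ennreal" where
  "migrations A I = (\<Sum>i<length I. item_migrations A I i)"

definition open_bins :: "bp_alg \<Rightarrow> bp_instance \<Rightarrow> real \<Rightarrow> nat" where
  "open_bins A I t = card ((\<lambda>i. A I t i) ` {i. present I i t})"

definition alg_cost :: "bp_alg \<Rightarrow> bp_instance \<Rightarrow> ennreal" where
  "alg_cost A I = (\<integral>\<^sup>+ t. of_nat (open_bins A I t) \<partial>lborel)"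

definition opt_bins :: "bp_instance \<Rightarrow> real \<Rightarrow> nat" where
  "opt_bins I t = (LEAST k. \<exists>f::nat \<Rightarrow> nat. (\<forall>i. present I i t \<longrightarrow> f i < k) \<and>
      (\<forall>b. (\<Sum>i\<in>{i. present I i t \<and> f i = b}. isize (I!i)) \<le> 1))"

definition OPT :: "bp_instance \<Rightarrow> ennreal" where
  "OPT I = (\<integral>\<^sup>+ t. of_nat (opt_bins I t) \<partial>lborel)"

(* A randomized algorithm: a probability space of random seeds, and for each seed a
   deterministic online algorithm; cost and migration counts are random variables. *)
definition randomized_online_alg :: "'w measure \<Rightarrow> ('w \<Rightarrow> bp_alg) \<Rightarrow> bool" where
  "randomized_online_alg M A \<longleftrightarrow> prob_space M \<and>
     (\<forall>\<omega>\<in>space M. online_packing_alg (A \<omega>)) \<and>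
     (\<forall>I. valid_instance I \<longrightarrow>
        (\<lambda>\<omega>. alg_cost (A \<omega>) I) \<in> borel_measurable M \<and>
        (\<lambda>\<omega>. migrations (A \<omega>) I) \<in> borel_measurable M)"

definition expected_cost :: "'w measure \<Rightarrow> ('w \<Rightarrow> bp_alg) \<Rightarrow> bp_instance \<Rightarrow> ennreal" where
  "expected_cost M A I = (\<integral>\<^sup>+ \<omega>. alg_cost (A \<omega>) I \<partial>M)"

definition expected_migrations :: "'w measure \<Rightarrow> ('w \<Rightarrow> bp_alg) \<Rightarrow> bp_instance \<Rightarrow> ennreal" where
  "expected_migrations M A I = (\<integral>\<^sup>+ \<omega>. migrations (A \<omega>) I \<partial>M)"

definition competitive_ratio_at_least :: "'w measure \<Rightarrow> ('w \<Rightarrow> bp_alg) \<Rightarrow> real \<Rightarrow> bool" where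
  "competitive_ratio_at_least M A \<gamma> \<longleftrightarrow>
     (\<forall>\<beta><\<gamma>. \<exists>I. valid_instance I \<and> expected_cost M A I > ennreal \<beta> * OPT I)"

end

(*
  Adversary: K^2 items of size 1/K arrive at time 0; the K items of a set S stay until
  time 1 + T, all others leave at time 1, so OPT pays at most K + T.  At time 0 all these
  instances look alike, hence the initial packing c of the algorithm (at most K items per
  bin) does not depend on S, and an item that is never migrated keeps its bin.  So on
  [1, 1 + T) every bin of c(S) that is not emptied by migrations stays open:
  cost + T * migrations >= T |c(S)|.  Counting monochromatic pairs shows that a uniformly
  random K-subset S meets at least (K + 1)/2 bins of c on average.  Averaging over S gives
  T (K + 1)/2 <= beta (K + T) + T alpha K^2, and letting T grow,
  beta >= (K + 1)/2 - alpha K^2, which exceeds floor(1/(4 alpha))/4 for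
  K = max 1 floor(1/(4 alpha)).
*)
theory Submission
  imports Defs
begin

definition monochromatic_pairs :: "('a \<Rightarrow> 'b) \<Rightarrow> 'a set \<Rightarrow> ('a \<times> 'a) set" where
  "monochromatic_pairs c S = {(x, y) \<in> S \<times> S. x \<noteq> y \<and> c x = c y}"

lemma finite_monochromatic_pairs: "finite S \<Longrightarrow> finite (monochromatic_pairs c S)"
  unfolding monochromatic_pairs_def by (rule finite_subset[of _ "S \<times> S"]) auto

lemma monochromatic_pairs_subset:
  "S \<subseteq> A \<Longrightarrow> monochromatic_pairs c S = {p \<in> monochromatic_pairs c A. p \<in> S \<times> S}"
  unfolding monochromatic_pairs_def by auto

lemma card_le_card_image_plus_monochromatic_pairs:
  assumes "finite S"
  shows "2 * card S \<le> 2 * card (c ` S) + card (monochromatic_pairs c S)"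
  using assms
proof (induction S rule: finite_induct)
  case empty
  show ?case by simp
next
  case (insert z S)
  have fin: "finite (monochromatic_pairs c (insert z S))"
    using insert.hyps by (simp add: finite_monochromatic_pairs)
  show ?case
  proof (cases "c z \<in> c ` S")
    case True
    then obtain w where w: "w \<in> S" "c w = c z" by auto
    with insert.hyps have "w \<noteq> z" by auto
    let ?new = "{(z, w), (w, z)}"
    have "monochromatic_pairs c S \<inter> ?new = {}"
      using insert.hyps unfolding monochromatic_pairs_def by auto
    then have "card (monochromatic_pairs c S \<union> ?new) = card (monochromatic_pairs c S) + 2"
      using \<open>w \<noteq> z\<close> insert.hyps(1) by (simp add: card_Un_disjoint finite_monochromatic_pairs)
    moreover have "monochromatic_pairs c S \<union> ?new \<subseteq> monochromatic_pairs c (insert z S)"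
      using w \<open>w \<noteq> z\<close> unfolding monochromatic_pairs_def by auto
    then have "card (monochromatic_pairs c S \<union> ?new) \<le> card (monochromatic_pairs c (insert z S))"
      by (rule card_mono[OF fin])
    moreover have "c ` insert z S = c ` S" using True by auto
    ultimately show ?thesis using insert by simp
  next
    case False
    then have "card (c ` insert z S) = Suc (card (c ` S))" using insert.hyps by simp
    moreover have "monochromatic_pairs c S \<subseteq> monochromatic_pairs c (insert z S)"
      unfolding monochromatic_pairs_def by auto
    then have "card (monochromatic_pairs c S) \<le> card (monochromatic_pairs c (insert z S))"
      by (rule card_mono[OF fin])
    ultimately show ?thesis using insert.IH insert.hyps by simp
  qed
qed

lemma card_monochromatic_pairs_le:
  assumes "finite A" and "\<And>b. card {x \<in> A. c x = b} \<le> m"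
  shows "card (monochromatic_pairs c A) \<le> card A * (m - 1)"
proof -
  have "monochromatic_pairs c A = (SIGMA x:A. {y \<in> A. c y = c x} - {x})"
    unfolding monochromatic_pairs_def by auto
  then have "card (monochromatic_pairs c A) = (\<Sum>x\<in>A. card ({y \<in> A. c y = c x} - {x}))"
    using assms(1) by (simp add: card_SigmaI)
  also have "\<dots> \<le> (\<Sum>x\<in>A. m - 1)"
  proof (rule sum_mono)
    fix x assume "x \<in> A"
    then show "card ({y \<in> A. c y = c x} - {x}) \<le> m - 1"
      using assms(2)[of "c x"] by (simp add: card_Diff_singleton_if assms(1))
  qed
  finally show ?thesis by simp
qed

lemma choose_minus_2_mult_eq:
  assumes "2 \<le> n" "2 \<le> k"
  shows "((n - 2) choose (k - 2)) * (n * (n - 1)) = (n choose k) * (k * (k - 1))"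
proof -
  have a: "k * (n choose k) = n * ((n - 1) choose (k - 1))"
    using binomial_absorption[of "k - 1" n] assms by simp
  have b: "(k - 1) * ((n - 1) choose (k - 1)) = (n - 1) * ((n - 2) choose (k - 2))"
    using binomial_absorption[of "k - 2" "n - 1"] assms by (simp add: numeral_2_eq_2 Suc_diff_Suc)
  have "(n choose k) * (k * (k - 1)) = (k - 1) * (k * (n choose k))" by (simp add: ac_simps)
  also have "\<dots> = n * ((k - 1) * ((n - 1) choose (k - 1)))" using a by (simp add: ac_simps)
  also have "\<dots> = n * ((n - 1) * ((n - 2) choose (k - 2)))" using b by simp
  finally show ?thesis by (simp add: ac_simps)
qed

lemma card_subsets_containing_two:
  assumes "finite A" "x \<in> A" "y \<in> A" "x \<noteq> y"
  shows "card {S. S \<subseteq> A \<and> card S = k \<and> x \<in> S \<and> y \<in> S} * (card A * (card A - 1))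
    = (card A choose k) * (k * (k - 1))"
proof (cases "k < 2")
  case True
  have "\<not> (S \<subseteq> A \<and> card S = k \<and> x \<in> S \<and> y \<in> S)" for S
  proof
    assume S: "S \<subseteq> A \<and> card S = k \<and> x \<in> S \<and> y \<in> S"
    then have "card {x, y} \<le> card S"
      using finite_subset[of S A] assms(1) by (intro card_mono) auto
    then show False using S True assms(4) by simp
  qed
  then have none: "{S. S \<subseteq> A \<and> card S = k \<and> x \<in> S \<and> y \<in> S} = {}" by blast
  have "k * (k - 1) = 0" using True by (cases k) auto
  then show ?thesis unfolding none by simp
next
  case False
  have "card {x, y} \<le> card A" using assms by (intro card_mono) auto
  then have n2: "2 \<le> card A" using assms(4) by simp
  have "bij_betw (\<lambda>S. S - {x, y}) {S. S \<subseteq> A \<and> card S = k \<and> x \<in> S \<and> y \<in> S}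
     {T. T \<subseteq> A - {x, y} \<and> card T = k - 2}"
  proof (rule bij_betw_byWitness[where f' = "\<lambda>T. T \<union> {x, y}"])
    show "(\<lambda>S. S - {x, y}) ` {S. S \<subseteq> A \<and> card S = k \<and> x \<in> S \<and> y \<in> S}
        \<subseteq> {T. T \<subseteq> A - {x, y} \<and> card T = k - 2}"
    proof (rule image_subsetI)
      fix S assume S: "S \<in> {S. S \<subseteq> A \<and> card S = k \<and> x \<in> S \<and> y \<in> S}"
      then have "finite S" using assms(1) finite_subset by blast
      then have "card (S - {x, y}) = k - 2" using S assms(4) by (simp add: card_Diff_subset)
      then show "S - {x, y} \<in> {T. T \<subseteq> A - {x, y} \<and> card T = k - 2}" using S by blast
    qed
    show "(\<lambda>T. T \<union> {x, y}) ` {T. T \<subseteq> A - {x, y} \<and> card T = k - 2}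
        \<subseteq> {S. S \<subseteq> A \<and> card S = k \<and> x \<in> S \<and> y \<in> S}"
    proof (rule image_subsetI)
      fix T assume T: "T \<in> {T. T \<subseteq> A - {x, y} \<and> card T = k - 2}"
      then have "finite T" using assms(1) finite_subset by blast
      moreover have "x \<notin> T" "y \<notin> T" using T by auto
      ultimately have "card (T \<union> {x, y}) = k" using T assms(4) False by simp
      then show "T \<union> {x, y} \<in> {S. S \<subseteq> A \<and> card S = k \<and> x \<in> S \<and> y \<in> S}"
        using T assms(2,3) by blast
    qed
  qed auto
  then have "card {S. S \<subseteq> A \<and> card S = k \<and> x \<in> S \<and> y \<in> S} = (card A - 2) choose (k - 2)"
    using assms by (simp add: bij_betw_same_card n_subsets numeral_2_eq_2)
  then show ?thesis using choose_minus_2_mult_eq[OF n2] False by simp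
qed

lemma sum_card_monochromatic_pairs_subsets:
  assumes A: "finite A"
  shows "(\<Sum>S | S \<subseteq> A \<and> card S = k. card (monochromatic_pairs c S)) * (card A * (card A - 1))
    = card (monochromatic_pairs c A) * ((card A choose k) * (k * (k - 1)))"
proof -
  define F where "F = {S. S \<subseteq> A \<and> card S = k}"
  define P where "P = monochromatic_pairs c A"
  have finF: "finite F" unfolding F_def using A by simp
  have finP: "finite P" unfolding P_def using A by (rule finite_monochromatic_pairs)
  have "(\<Sum>S\<in>F. card (monochromatic_pairs c S)) = (\<Sum>S\<in>F. card {p \<in> P. p \<in> S \<times> S})"
  proof (rule sum.cong[OF refl])
    fix S assume "S \<in> F"
    then have "S \<subseteq> A" unfolding F_def by simp
    then show "card (monochromatic_pairs c S) = card {p \<in> P. p \<in> S \<times> S}"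
      unfolding P_def by (simp only: monochromatic_pairs_subset)
  qed
  also have "\<dots> = (\<Sum>p\<in>P. card {S \<in> F. p \<in> S \<times> S})"
    by (rule sum_multicount_gen[OF finF finP]) simp
  finally have "(\<Sum>S\<in>F. card (monochromatic_pairs c S)) * (card A * (card A - 1))
      = (\<Sum>p\<in>P. card {S \<in> F. p \<in> S \<times> S} * (card A * (card A - 1)))"
    by (simp add: sum_distrib_right)
  also have "\<dots> = (\<Sum>p\<in>P. (card A choose k) * (k * (k - 1)))"
  proof (rule sum.cong[OF refl])
    fix p assume "p \<in> P"
    then obtain x y where p: "p = (x, y)" "x \<in> A" "y \<in> A" "x \<noteq> y"
      unfolding P_def monochromatic_pairs_def by auto
    have "{S \<in> F. p \<in> S \<times> S} = {S. S \<subseteq> A \<and> card S = k \<and> x \<in> S \<and> y \<in> S}"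
      unfolding F_def p by auto
    then show "card {S \<in> F. p \<in> S \<times> S} * (card A * (card A - 1))
        = (card A choose k) * (k * (k - 1))"
      using card_subsets_containing_two[OF A p(2-4)] by simp
  qed
  finally show ?thesis unfolding F_def P_def by simp
qed

lemma sum_card_image_subsets_lower_bound:
  fixes c :: "'a \<Rightarrow> 'b"
  assumes A: "finite A" and fibres: "\<And>b. card {x \<in> A. c x = b} \<le> m"
  shows "(card A choose k) * k * (2 * (card A - 1))
    \<le> 2 * (card A - 1) * (\<Sum>S | S \<subseteq> A \<and> card S = k. card (c ` S))
      + (card A choose k) * k * (k - 1) * (m - 1)"
proof -
  define n where "n = card A"
  define F where "F = {S. S \<subseteq> A \<and> card S = k}"
  define X where "X = (\<Sum>S\<in>F. card (c ` S))"
  define Y where "Y = (\<Sum>S\<in>F. card (monochromatic_pairs c S))"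
  have cardF: "card F = n choose k" unfolding F_def n_def using A by (rule n_subsets)
  have "2 * k \<le> 2 * card (c ` S) + card (monochromatic_pairs c S)" if "S \<in> F" for S
  proof -
    have "S \<subseteq> A" "card S = k" using that unfolding F_def by auto
    then show ?thesis
      using card_le_card_image_plus_monochromatic_pairs[OF finite_subset[OF \<open>S \<subseteq> A\<close> A]] by simp
  qed
  then have "(\<Sum>S\<in>F. 2 * k) \<le> (\<Sum>S\<in>F. 2 * card (c ` S) + card (monochromatic_pairs c S))"
    by (rule sum_mono)
  then have per_set: "card F * (2 * k) \<le> 2 * X + Y"
    unfolding X_def Y_def by (simp add: sum.distrib sum_distrib_left)
  have "Y * (n * (n - 1)) = card (monochromatic_pairs c A) * (card F * (k * (k - 1)))"
    unfolding Y_def F_def n_def cardF[unfolded F_def n_def]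
    by (rule sum_card_monochromatic_pairs_subsets[OF A])
  also have "\<dots> \<le> n * (m - 1) * (card F * (k * (k - 1)))"
    using card_monochromatic_pairs_le[OF A fibres] unfolding n_def by (rule mult_right_mono) simp
  finally have pairs: "Y * (n * (n - 1)) \<le> n * ((m - 1) * card F * k * (k - 1))"
    by (simp add: ac_simps)
  have "n * (card F * k * (2 * (n - 1))) = (card F * (2 * k)) * (n * (n - 1))"
    by (simp add: ac_simps)
  also have "\<dots> \<le> (2 * X + Y) * (n * (n - 1))" using per_set by (rule mult_right_mono) simp
  also have "\<dots> = n * (2 * (n - 1) * X) + Y * (n * (n - 1))"
    by (simp only: distrib_right) (simp add: ac_simps)
  also have "\<dots> \<le> n * (2 * (n - 1) * X + (m - 1) * card F * k * (k - 1))"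
    using pairs by (simp add: algebra_simps)
  finally have "card F * k * (2 * (n - 1)) \<le> 2 * (n - 1) * X + (m - 1) * card F * k * (k - 1)"
    by (cases "n = 0") simp_all
  then show ?thesis unfolding X_def F_def n_def cardF[unfolded F_def n_def] by (simp add: ac_simps)
qed

lemma sum_card_image_square_subsets_lower_bound:
  fixes c :: "'a \<Rightarrow> 'b"
  assumes A: "finite A" "card A = K * K" and K: "1 \<le> K"
    and fibres: "\<And>b. card {x \<in> A. c x = b} \<le> K"
  shows "(K * K choose K) * (K + 1) \<le> 2 * (\<Sum>S | S \<subseteq> A \<and> card S = K. card (c ` S))"
proof -
  define C where "C = K * K choose K"
  define X where "X = (\<Sum>S | S \<subseteq> A \<and> card S = K. card (c ` S))"
  have cardF: "card {S. S \<subseteq> A \<and> card S = K} = C"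
    unfolding C_def using A by (simp add: n_subsets)
  show ?thesis
  proof (cases "K = 1")
    case True
    have "1 \<le> card (c ` S)" if "S \<in> {S. S \<subseteq> A \<and> card S = K}" for S
      using that True by (auto simp: card_1_singleton_iff)
    then have "(\<Sum>S | S \<subseteq> A \<and> card S = K. 1) \<le> X"
      unfolding X_def by (rule sum_mono)
    then show ?thesis using True cardF unfolding C_def X_def by simp
  next
    case False
    then obtain L where L: "K = Suc L" "0 < L" using K by (cases K) auto
    have "K * K - 1 = L * (L + 2)" "K - 1 = L" using L by simp_all
    then have "C * K * (2 * (L * (L + 2))) \<le> 2 * (L * (L + 2)) * X + C * K * L * L"
      using sum_card_image_subsets_lower_bound[OF A(1) fibres, of K]
      unfolding C_def X_def A(2) by (simp only: mult.assoc)
    then have "L * (C * (L + 1) * 2 * (L + 2)) \<le> L * (2 * (L + 2) * X + C * (L + 1) * L)"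
      unfolding L by (simp add: algebra_simps)
    then have "C * (L + 1) * 2 * (L + 2) \<le> 2 * (L + 2) * X + C * (L + 1) * L"
      using L(2) by simp
    moreover have "C * (L + 2) * (L + 2) + C * (L + 1) * L \<le> C * (L + 1) * 2 * (L + 2)"
      by (simp add: algebra_simps)
    ultimately have "(L + 2) * (C * (L + 2)) \<le> (L + 2) * (2 * X)"
      by (simp add: ac_simps)
    then have "C * (L + 2) \<le> 2 * X" by (rule mult_left_le_imp_le) simp
    moreover have "K + 1 = L + 2" using L by simp
    ultimately have "C * (K + 1) \<le> 2 * X" by (simp only:)
    then show ?thesis unfolding C_def X_def .
  qed
qed

lemma locally_constant_atLeastLessThan:
  fixes f :: "real \<Rightarrow> 'b"
  assumes right: "\<And>x. x \<in> {a..<e} \<Longrightarrow> \<exists>d>0. \<forall>u. x \<le> u \<longrightarrow> u < x + d \<longrightarrow> u < e \<longrightarrow> f u = f x"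
    and left: "\<And>x. x \<in> {a<..<e} \<Longrightarrow> \<exists>d>0. \<forall>u. x - d < u \<longrightarrow> u < x \<longrightarrow> f u = f x"
    and t: "t \<in> {a..<e}"
  shows "f t = f a"
proof (rule connected_local_const[of "{a..<e}"])
  show "\<forall>x\<in>{a..<e}. \<forall>\<^sub>F y in at x within {a..<e}. f x = f y"
  proof
    fix x assume x: "x \<in> {a..<e}"
    obtain d1 where d1: "d1 > 0" "\<And>u. x \<le> u \<Longrightarrow> u < x + d1 \<Longrightarrow> u < e \<Longrightarrow> f u = f x"
      using right[OF x] by blast
    obtain d2 where d2: "d2 > 0" "\<And>u. a < x \<Longrightarrow> x - d2 < u \<Longrightarrow> u < x \<Longrightarrow> f u = f x"
    proof (cases "a < x")
      case True
      then show ?thesis using left[of x] x that by auto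
    qed (use that[of 1] in simp)
    show "\<forall>\<^sub>F y in at x within {a..<e}. f x = f y"
      unfolding eventually_at
    proof (intro exI[of _ "min d1 d2"] conjI ballI impI)
      fix y assume y: "y \<in> {a..<e}" "y \<noteq> x \<and> dist y x < min d1 d2"
      show "f x = f y"
      proof (cases "x < y")
        case True
        then show ?thesis using d1(2)[of y] y unfolding dist_real_def by auto
      next
        case False
        then show ?thesis using d2(2)[of y] x y unfolding dist_real_def by auto
      qed
    qed (use d1 d2 in simp)
  qed
qed (use t in simp_all)

lemma online_packing_alg_view_determines_bin:
  "online_packing_alg B \<Longrightarrow> valid_instance I \<Longrightarrow> valid_instance I' \<Longrightarrow> view I t = view I' t
    \<Longrightarrow> present I i t \<Longrightarrow> B I t i = B I' t i"
  unfolding online_packing_alg_def by blast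

lemma online_packing_alg_bin_load_le_1:
  "online_packing_alg B \<Longrightarrow> valid_instance I
    \<Longrightarrow> (\<Sum>i\<in>{i. present I i t \<and> B I t i = b}. isize (I!i)) \<le> 1"
  unfolding online_packing_alg_def by blast

lemma online_packing_alg_right_constant:
  "online_packing_alg B \<Longrightarrow> valid_instance I \<Longrightarrow> present I i t
    \<Longrightarrow> \<exists>d>0. \<forall>u. t \<le> u \<longrightarrow> u < t + d \<longrightarrow> present I i u \<longrightarrow> B I u i = B I t i"
  unfolding online_packing_alg_def by blast

lemma bin_constant_without_migration:
  assumes B: "online_packing_alg B" and I: "valid_instance I"
    and no_mig: "migration_times B I i = {}" and t: "present I i t"
  shows "B I t i = B I (arr (I!i)) i"
proof (rule locally_constant_atLeastLessThan[where f = "\<lambda>u. B I u i"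
      and e = "arr (I!i) + dur (I!i)"])
  have present_iff: "present I i u \<longleftrightarrow> u \<in> {arr (I!i)..<arr (I!i) + dur (I!i)}" for u
    using t unfolding present_def by auto
  then show "t \<in> {arr (I!i)..<arr (I!i) + dur (I!i)}" using t by blast
  show "\<exists>d>0. \<forall>u. x \<le> u \<longrightarrow> u < x + d \<longrightarrow> u < arr (I!i) + dur (I!i) \<longrightarrow> B I u i = B I x i"
    if "x \<in> {arr (I!i)..<arr (I!i) + dur (I!i)}" for x
    using online_packing_alg_right_constant[OF B I, of i x] that present_iff by auto
  show "\<exists>d>0. \<forall>u. x - d < u \<longrightarrow> u < x \<longrightarrow> B I u i = B I x i"
    if "x \<in> {arr (I!i)<..<arr (I!i) + dur (I!i)}" for x
  proof -
    have "x \<notin> migration_times B I i" using no_mig by simp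
    then show ?thesis using that unfolding migration_times_def by auto
  qed
qed

lemma alg_cost_ge_interval:
  assumes "0 \<le> T" and "\<And>t. t \<in> {a..<a + T} \<Longrightarrow> n \<le> open_bins B I t"
  shows "of_nat n * ennreal T \<le> alg_cost B I"
proof -
  have "of_nat n * ennreal T = (\<integral>\<^sup>+ t. of_nat n * indicator {a..<a + T} t \<partial>lborel)"
    using assms(1) by (simp add: nn_integral_cmult_indicator)
  also have "\<dots> \<le> alg_cost B I"
    unfolding alg_cost_def using assms(2) by (intro nn_integral_mono) (simp split: split_indicator)
  finally show ?thesis .
qed

lemma item_migrations_ge_1:
  assumes "migration_times B I i \<noteq> {}"
  shows "1 \<le> item_migrations B I i"
  using assms by (simp add: item_migrations_def Suc_leI card_gt_0_iff)

lemma card_migrated_le_migrations: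
  assumes "X \<subseteq> {i. i < length I \<and> migration_times B I i \<noteq> {}}"
  shows "of_nat (card X) \<le> migrations B I"
proof -
  have "of_nat (card X) = (\<Sum>i\<in>X. 1::ennreal)" by simp
  also have "\<dots> \<le> (\<Sum>i\<in>X. item_migrations B I i)"
    using assms by (intro sum_mono item_migrations_ge_1) auto
  also have "\<dots> \<le> (\<Sum>i<length I. item_migrations B I i)"
    using assms by (intro sum_mono2) auto
  finally show ?thesis unfolding migrations_def .
qed

lemma opt_bins_le_packing:
  assumes "\<And>i. present I i t \<Longrightarrow> f i < k"
    and "\<And>b. (\<Sum>i\<in>{i. present I i t \<and> f i = b}. isize (I!i)) \<le> 1"
  shows "opt_bins I t \<le> k"
  unfolding opt_bins_def by (rule Least_le) (use assms in blast)

definition adversary_instance :: "nat \<Rightarrow> real \<Rightarrow> nat set \<Rightarrow> bp_instance" where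
  "adversary_instance K T S =
    map (\<lambda>i. (0, 1 / real K, if i \<in> S then 1 + T else 1)) [0..<K * K]"

lemma length_adversary_instance [simp]: "length (adversary_instance K T S) = K * K"
  by (simp add: adversary_instance_def)

lemma adversary_instance_nth [simp]:
  assumes "i < K * K"
  shows "arr (adversary_instance K T S ! i) = 0" "isize (adversary_instance K T S ! i) = 1 / real K"
    "dur (adversary_instance K T S ! i) = (if i \<in> S then 1 + T else 1)"
  using assms by (simp_all add: adversary_instance_def arr_def isize_def dur_def)

lemma valid_adversary_instance:
  assumes "0 \<le> T"
  shows "valid_instance (adversary_instance K T S)"
proof -
  have "map arr (adversary_instance K T S) = replicate (K * K) 0"
    by (rule nth_equalityI) simp_all
  moreover have "0 \<le> arr x \<and> 0 \<le> isize x \<and> isize x \<le> 1 \<and> 0 < dur x"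
    if "x \<in> set (adversary_instance K T S)" for x
  proof -
    have "1 / real K \<le> 1" by (cases K) (simp_all add: field_simps)
    then show ?thesis using that assms by (auto simp: in_set_conv_nth)
  qed
  ultimately show ?thesis unfolding valid_instance_def by (simp add: sorted_replicate)
qed

lemma present_adversary_instance:
  "present (adversary_instance K T S) i t
    \<longleftrightarrow> i < K * K \<and> 0 \<le> t \<and> t < (if i \<in> S then 1 + T else 1)"
  unfolding present_def by auto

lemma view_adversary_instance_0:
  assumes "0 \<le> T"
  shows "view (adversary_instance K T S) 0 = view (adversary_instance K T S') 0"
  using assms by (auto simp: view_def)

lemma adversary_instance_load:
  assumes "X \<subseteq> {..<K * K}"
  shows "(\<Sum>i\<in>X. isize (adversary_instance K T S ! i)) = real (card X) / real K"
  using assms by (simp add: subset_eq)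

lemma adversary_instance_load_le_1_iff:
  assumes "X \<subseteq> {..<K * K}" and "1 \<le> K"
  shows "(\<Sum>i\<in>X. isize (adversary_instance K T S ! i)) \<le> 1 \<longleftrightarrow> card X \<le> K"
  using assms by (simp add: adversary_instance_load divide_le_eq)

lemma opt_bins_adversary_instance_le:
  assumes K: "1 \<le> K" and S: "S \<subseteq> {..<K * K}" "card S \<le> K"
  shows "opt_bins (adversary_instance K T S) t
    \<le> (if 0 \<le> t \<and> t < 1 then K else if 1 \<le> t \<and> t < 1 + T then 1 else 0)"
proof -
  let ?I = "adversary_instance K T S"
  have load: "(\<Sum>i\<in>{i. present ?I i t \<and> P i}. isize (?I ! i)) \<le> 1"
    if "card {i. present ?I i t \<and> P i} \<le> K" for P
    using that K by (subst adversary_instance_load_le_1_iff) (auto simp: present_adversary_instance)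
  consider (early) "0 \<le> t" "t < 1" | (late) "1 \<le> t" "t < 1 + T"
    | (none) "t < 0 \<or> 1 + T \<le> t \<and> 1 \<le> t"
    by linarith
  then show ?thesis
  proof cases
    case early
    have "opt_bins ?I t \<le> K"
    proof (rule opt_bins_le_packing[where f = "\<lambda>i. i div K"])
      show "i div K < K" if "present ?I i t" for i
        using that by (simp add: present_adversary_instance less_mult_imp_div_less)
      have "card {i. present ?I i t \<and> i div K = b} \<le> card {b * K..<b * K + K}" for b
        using K dividend_less_div_times[of K] by (intro card_mono) (auto simp: add.commute)
      then show "(\<Sum>i\<in>{i. present ?I i t \<and> i div K = b}. isize (?I ! i)) \<le> 1" for b
        by (intro load) simp
    qed
    then show ?thesis using early by simp
  next
    case late
    have "{i. present ?I i t \<and> (0::nat) = b} \<subseteq> S" for b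
      using late by (auto simp: present_adversary_instance split: if_splits)
    then have "card {i. present ?I i t \<and> (0::nat) = b} \<le> K" for b
      using card_mono[OF finite_subset[OF S(1) finite_lessThan]] S(2) le_trans by blast
    then have "opt_bins ?I t \<le> 1"
      by (intro opt_bins_le_packing[where f = "\<lambda>i. 0"] load) auto
    then show ?thesis using late by simp
  next
    case none
    then have "opt_bins ?I t \<le> 0"
      by (intro opt_bins_le_packing) (auto simp: present_adversary_instance split: if_splits)
    then show ?thesis by simp
  qed
qed

lemma OPT_adversary_instance_le:
  assumes "1 \<le> K" "0 \<le> T" "S \<subseteq> {..<K * K}" "card S \<le> K"
  shows "OPT (adversary_instance K T S) \<le> ennreal (real K + T)"
proof -
  have "OPT (adversary_instance K T S)
      \<le> (\<integral>\<^sup>+ t. of_nat K * indicator {0..<1} t + indicator {1..<1 + T} t \<partial>lborel)"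
    unfolding OPT_def
  proof (rule nn_integral_mono)
    fix t
    show "of_nat (opt_bins (adversary_instance K T S) t)
        \<le> (of_nat K * indicator {0..<1} t + indicator {1..<1 + T} t :: ennreal)"
      using opt_bins_adversary_instance_le[OF assms(1,3,4), of T t] by (auto simp: indicator_def)
  qed
  also have "\<dots> = ennreal (real K + T)"
    using assms(2) by (simp add: nn_integral_add nn_integral_cmult_indicator ennreal_plus
        ennreal_of_nat_eq_real_of_nat)
  finally show ?thesis .
qed

lemma adversary_initial_bin:
  assumes B: "online_packing_alg B" and T: "0 \<le> T" and i: "i < K * K"
  shows "B (adversary_instance K T S) 0 i = B (adversary_instance K T {}) 0 i"
proof -
  have "present (adversary_instance K T S) i 0" using T i by (simp add: present_adversary_instance)
  then show ?thesis
    using online_packing_alg_view_determines_bin[OF B valid_adversary_instance[OF T]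
        valid_adversary_instance[OF T] view_adversary_instance_0[OF T]] by blast
qed

lemma card_adversary_initial_bin_le:
  assumes B: "online_packing_alg B" and K: "1 \<le> K" and "0 \<le> T"
  shows "card {i \<in> {..<K * K}. B (adversary_instance K T S) 0 i = b} \<le> K"
proof -
  let ?I = "adversary_instance K T S"
  have "{i. present ?I i 0 \<and> B ?I 0 i = b} = {i \<in> {..<K * K}. B ?I 0 i = b}"
    using \<open>0 \<le> T\<close> by (auto simp: present_adversary_instance)
  moreover have "(\<Sum>i\<in>{i. present ?I i 0 \<and> B ?I 0 i = b}. isize (?I ! i)) \<le> 1"
    using online_packing_alg_bin_load_le_1[OF B valid_adversary_instance[OF \<open>0 \<le> T\<close>]] .
  ultimately show ?thesis using K by (simp add: adversary_instance_load_le_1_iff)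
qed

lemma adversary_cost_plus_migrations_ge:
  assumes B: "online_packing_alg B" and T: "0 \<le> T" and S: "S \<subseteq> {..<K * K}"
  shows "ennreal T * of_nat (card ((\<lambda>i. B (adversary_instance K T {}) 0 i) ` S))
    \<le> alg_cost B (adversary_instance K T S)
      + ennreal T * migrations B (adversary_instance K T S)"
proof -
  let ?I = "adversary_instance K T S"
  define c where "c = (\<lambda>i. B (adversary_instance K T {}) 0 i)"
  define Mg where "Mg = {i \<in> S. migration_times B ?I i \<noteq> {}}"
  have finS: "finite S" using S finite_subset by blast
  have stay: "B ?I t i = c i" if "i \<in> S - Mg" "t \<in> {1..<1 + T}" for i t
  proof -
    have i: "i < K * K" using that S by auto
    have "present ?I i t" using that i by (simp add: present_adversary_instance)
    then have "B ?I t i = B ?I (arr (?I ! i)) i"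
      using that Mg_def
      by (intro bin_constant_without_migration[OF B valid_adversary_instance[OF T]]) auto
    then show ?thesis unfolding c_def using adversary_initial_bin[OF B T i] i by simp
  qed
  have "card (c ` (S - Mg)) \<le> open_bins B ?I t" if "t \<in> {1..<1 + T}" for t
  proof -
    have "c ` (S - Mg) \<subseteq> (\<lambda>i. B ?I t i) ` {i. present ?I i t}"
    proof
      fix x assume "x \<in> c ` (S - Mg)"
      then obtain i where i: "i \<in> S - Mg" "x = c i" by blast
      then have "present ?I i t" using S that by (auto simp: present_adversary_instance)
      then show "x \<in> (\<lambda>i. B ?I t i) ` {i. present ?I i t}"
        using stay[OF i(1) that] i(2) by force
    qed
    moreover have "finite {i. present ?I i t}"
      by (rule finite_subset[of _ "{..<K * K}"]) (auto simp: present_adversary_instance)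
    ultimately show ?thesis unfolding open_bins_def by (intro card_mono) auto
  qed
  then have cost: "of_nat (card (c ` (S - Mg))) * ennreal T \<le> alg_cost B ?I"
    by (rule alg_cost_ge_interval[OF T])
  have mig: "of_nat (card Mg) \<le> migrations B ?I"
    using S by (intro card_migrated_le_migrations) (auto simp: Mg_def)
  have "card (c ` S) \<le> card (c ` (S - Mg) \<union> c ` Mg)"
    using finS by (intro card_mono) (auto simp: Mg_def)
  also have "\<dots> \<le> card (c ` (S - Mg)) + card (c ` Mg)" by (rule card_Un_le)
  also have "\<dots> \<le> card (c ` (S - Mg)) + card Mg"
    using finS card_image_le[of Mg c] by (simp add: Mg_def)
  finally have "of_nat (card (c ` S)) \<le> (of_nat (card (c ` (S - Mg)) + card Mg) :: ennreal)"
    by (rule of_nat_mono)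
  then have "ennreal T * of_nat (card (c ` S))
      \<le> ennreal T * of_nat (card (c ` (S - Mg)) + card Mg)"
    by (rule mult_left_mono) simp
  also have "\<dots> = of_nat (card (c ` (S - Mg))) * ennreal T + ennreal T * of_nat (card Mg)"
    by (simp add: distrib_left mult.commute)
  also have "\<dots> \<le> alg_cost B ?I + ennreal T * migrations B ?I"
    by (rule add_mono[OF cost mult_left_mono[OF mig]]) simp
  finally show ?thesis unfolding c_def .
qed

lemma sum_adversary_cost_plus_migrations_ge:
  assumes B: "online_packing_alg B" and K: "1 \<le> K" and T: "0 \<le> T"
  shows "of_nat (K * K choose K) * ennreal (T * (real K + 1) / 2)
    \<le> (\<Sum>S | S \<subseteq> {..<K * K} \<and> card S = K.
          alg_cost B (adversary_instance K T S)
          + ennreal T * migrations B (adversary_instance K T S))"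
proof -
  define c where "c = (\<lambda>i. B (adversary_instance K T {}) 0 i)"
  define F where "F = {S. S \<subseteq> {..<K * K} \<and> card S = K}"
  have "(K * K choose K) * (K + 1) \<le> 2 * (\<Sum>S\<in>F. card (c ` S))"
    unfolding F_def c_def using card_adversary_initial_bin_le[OF B K T]
    by (intro sum_card_image_square_subsets_lower_bound[OF _ _ K]) simp_all
  then have "real ((K * K choose K) * (K + 1)) \<le> real (2 * (\<Sum>S\<in>F. card (c ` S)))"
    by (rule of_nat_mono)
  then have "real (K * K choose K) * (real K + 1) \<le> 2 * (\<Sum>S\<in>F. real (card (c ` S)))"
    by (simp add: distrib_left)
  then have "T * (real (K * K choose K) * (real K + 1))
      \<le> T * (2 * (\<Sum>S\<in>F. real (card (c ` S))))"
    using T by (rule mult_left_mono)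
  then have real_bound: "real (K * K choose K) * (T * (real K + 1) / 2)
      \<le> (\<Sum>S\<in>F. T * real (card (c ` S)))"
    by (simp add: sum_distrib_left field_simps)
  have "of_nat (K * K choose K) * ennreal (T * (real K + 1) / 2)
      = ennreal (real (K * K choose K) * (T * (real K + 1) / 2))"
    by (simp only: ennreal_mult'[OF of_nat_0_le_iff] ennreal_of_nat_eq_real_of_nat)
  also have "\<dots> \<le> ennreal (\<Sum>S\<in>F. T * real (card (c ` S)))"
    using real_bound by (rule ennreal_leI)
  also have "\<dots> = (\<Sum>S\<in>F. ennreal T * of_nat (card (c ` S)))"
    using T by (simp add: ennreal_mult ennreal_of_nat_eq_real_of_nat flip: sum_ennreal)
  also have "\<dots> \<le> (\<Sum>S\<in>F. alg_cost B (adversary_instance K T S)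
      + ennreal T * migrations B (adversary_instance K T S))"
    unfolding c_def F_def by (intro sum_mono adversary_cost_plus_migrations_ge[OF B T]) simp
  finally show ?thesis unfolding F_def .
qed

lemma sum_expected_adversary_cost_plus_migrations_ge:
  assumes A: "randomized_online_alg M A" and K: "1 \<le> K" and T: "0 \<le> T"
  shows "of_nat (K * K choose K) * ennreal (T * (real K + 1) / 2)
    \<le> (\<Sum>S | S \<subseteq> {..<K * K} \<and> card S = K.
          expected_cost M A (adversary_instance K T S)
          + ennreal T * expected_migrations M A (adversary_instance K T S))"
proof -
  interpret prob_space M using A unfolding randomized_online_alg_def by blast
  let ?I = "adversary_instance K T"
  define F where "F = {S. S \<subseteq> {..<K * K} \<and> card S = K}"
  have cost_meas: "(\<lambda>\<omega>. alg_cost (A \<omega>) (?I S)) \<in> borel_measurable M"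
    and mig_meas: "(\<lambda>\<omega>. migrations (A \<omega>) (?I S)) \<in> borel_measurable M" for S
    using A valid_adversary_instance[OF T] unfolding randomized_online_alg_def by blast+
  have "of_nat (K * K choose K) * ennreal (T * (real K + 1) / 2)
      = (\<integral>\<^sup>+ \<omega>. of_nat (K * K choose K) * ennreal (T * (real K + 1) / 2) \<partial>M)"
    by (simp add: emeasure_space_1)
  also have "\<dots> \<le> (\<integral>\<^sup>+ \<omega>. (\<Sum>S\<in>F. alg_cost (A \<omega>) (?I S)
      + ennreal T * migrations (A \<omega>) (?I S)) \<partial>M)"
    using A unfolding F_def randomized_online_alg_def
    by (intro nn_integral_mono sum_adversary_cost_plus_migrations_ge[OF _ K T]) blast
  also have "\<dots> = (\<Sum>S\<in>F. expected_cost M A (?I S) + ennreal T * expected_migrations M A (?I S))"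
    unfolding expected_cost_def expected_migrations_def using cost_meas mig_meas
    by (simp add: nn_integral_sum nn_integral_add nn_integral_cmult)
  finally show ?thesis unfolding F_def .
qed

lemma expected_adversary_cost_plus_migrations_le:
  assumes K: "1 \<le> K" and T: "0 \<le> T" and b: "0 \<le> b" and \<alpha>: "0 \<le> \<alpha>"
    and S: "S \<subseteq> {..<K * K}" "card S = K"
    and mig: "\<And>I. valid_instance I \<Longrightarrow> expected_migrations M A I \<le> ennreal (\<alpha> * real (length I))"
    and cost: "\<And>I. valid_instance I \<Longrightarrow> expected_cost M A I \<le> ennreal b * OPT I"
  shows "expected_cost M A (adversary_instance K T S)
      + ennreal T * expected_migrations M A (adversary_instance K T S)
    \<le> ennreal (b * (real K + T) + T * (\<alpha> * real (K * K)))"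
proof -
  let ?I = "adversary_instance K T S"
  have "expected_cost M A ?I \<le> ennreal b * OPT ?I"
    using cost[OF valid_adversary_instance[OF T]] .
  also have "\<dots> \<le> ennreal b * ennreal (real K + T)"
    using OPT_adversary_instance_le[OF K T S(1)] S(2) by (intro mult_left_mono) simp_all
  finally have "expected_cost M A ?I + ennreal T * expected_migrations M A ?I
      \<le> ennreal b * ennreal (real K + T) + ennreal T * ennreal (\<alpha> * real (K * K))"
    using mig[OF valid_adversary_instance[OF T]] by (intro add_mono mult_left_mono) simp_all
  also have "\<dots> = ennreal (b * (real K + T) + T * (\<alpha> * real (K * K)))"
    using T b \<alpha> by (simp add: ennreal_mult ennreal_plus)
  finally show ?thesis .
qed

lemma competitive_ratio_ge_half_minus_migration_budget:
  assumes A: "randomized_online_alg M A" and K: "1 \<le> K" and b: "0 \<le> b" and \<alpha>: "0 \<le> \<alpha>"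
    and mig: "\<And>I. valid_instance I \<Longrightarrow> expected_migrations M A I \<le> ennreal (\<alpha> * real (length I))"
    and cost: "\<And>I. valid_instance I \<Longrightarrow> expected_cost M A I \<le> ennreal b * OPT I"
  shows "(real K + 1) / 2 \<le> b + \<alpha> * real (K * K)"
proof (rule field_le_epsilon)
  fix e :: real assume e: "0 < e"
  \<comment> \<open>a large T makes the cost K that OPT pays on [0, 1) negligible\<close>
  define T where "T = (b * real K + 1) / e"
  have T: "0 < T" unfolding T_def using e b by (intro divide_pos_pos add_nonneg_pos) simp_all
  define u where "u = b * (real K + T) + T * (\<alpha> * real (K * K))"
  have "0 \<le> u" unfolding u_def using T b \<alpha> by simp
  have "of_nat (K * K choose K) * ennreal (T * (real K + 1) / 2)
      \<le> (\<Sum>S | S \<subseteq> {..<K * K} \<and> card S = K.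
            expected_cost M A (adversary_instance K T S)
            + ennreal T * expected_migrations M A (adversary_instance K T S))"
    using T by (intro sum_expected_adversary_cost_plus_migrations_ge[OF A K]) simp
  also have "\<dots> \<le> (\<Sum>S | S \<subseteq> {..<K * K} \<and> card S = K. ennreal u)"
    unfolding u_def using T
    by (intro sum_mono expected_adversary_cost_plus_migrations_le[OF K _ b \<alpha> _ _ mig cost]) simp_all
  also have "\<dots> = of_nat (K * K choose K) * ennreal u" by (simp add: n_subsets)
  finally have "ennreal (T * (real K + 1) / 2) \<le> ennreal u"
    using K by (simp add: ennreal_mult_le_mult_iff)
  then have "T * (real K + 1) / 2 \<le> u" using \<open>0 \<le> u\<close> by simp
  then have "(real K + 1) / 2 \<le> b + \<alpha> * real (K * K) + b * real K / T"
    using T unfolding u_def by (simp add: field_simps)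
  moreover have "b * real K / T \<le> e"
  proof -
    have "0 \<le> b * real K" using b by simp
    then have "e * (b * real K) \<le> e * (b * real K + 1)" using e by simp
    then show ?thesis unfolding T_def using e \<open>0 \<le> b * real K\<close> by (simp add: field_simps)
  qed
  ultimately show "(real K + 1) / 2 \<le> b + \<alpha> * real (K * K) + e" by linarith
qed

lemma migration_budget_below_half:
  assumes "0 < \<alpha>" "\<alpha> < 1" "\<beta> < real_of_int \<lfloor>1 / (4 * \<alpha>)\<rfloor> / 4"
    and K: "K = max 1 (nat \<lfloor>1 / (4 * \<alpha>)\<rfloor>)"
  shows "max 0 \<beta> + \<alpha> * real (K * K) < (real K + 1) / 2"
proof (cases "\<lfloor>1 / (4 * \<alpha>)\<rfloor> = 0")
  case True
  then show ?thesis using assms by simp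
next
  case False
  define k where "k = \<lfloor>1 / (4 * \<alpha>)\<rfloor>"
  have "0 \<le> k" unfolding k_def using assms(1) by simp
  then have "1 \<le> k" using False unfolding k_def by linarith
  then have k: "real K = real_of_int k" unfolding K k_def[symmetric] by simp
  have "real_of_int k \<le> 1 / (4 * \<alpha>)" unfolding k_def by simp
  then have "\<alpha> * real K \<le> 1 / 4" using assms(1) k by (simp add: le_divide_eq ac_simps)
  then have "\<alpha> * real K * real K \<le> 1 / 4 * real K" by (rule mult_right_mono) simp
  then have "\<alpha> * real (K * K) \<le> real K / 4" by (simp add: mult.assoc)
  moreover have "max 0 \<beta> < real K / 4" using assms(3)[folded k_def] k \<open>1 \<le> k\<close> by simp
  ultimately show ?thesis by simp
qed

theorem theorem3:
  fixes \<alpha> :: real and M :: "'w measure" and A :: "'w \<Rightarrow> bp_alg"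
  assumes "0 < \<alpha>" and "\<alpha> < 1"
    and "randomized_online_alg M A"
    and "\<forall>I. valid_instance I \<longrightarrow> expected_migrations M A I \<le> ennreal (\<alpha> * real (length I))"
  shows "competitive_ratio_at_least M A (real_of_int \<lfloor>1 / (4 * \<alpha>)\<rfloor> / 4)"
  unfolding competitive_ratio_at_least_def
proof (intro allI impI)
  fix \<beta> assume \<beta>: "\<beta> < real_of_int \<lfloor>1 / (4 * \<alpha>)\<rfloor> / 4"
  define K where "K = max 1 (nat \<lfloor>1 / (4 * \<alpha>)\<rfloor>)"
  show "\<exists>I. valid_instance I \<and> ennreal \<beta> * OPT I < expected_cost M A I"
  proof (rule ccontr)
    assume "\<nexists>I. valid_instance I \<and> ennreal \<beta> * OPT I < expected_cost M A I"
    then have "expected_cost M A I \<le> ennreal (max 0 \<beta>) * OPT I" if "valid_instance I" for I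
      using that by (auto simp: not_less ennreal_max_0)
    then have "(real K + 1) / 2 \<le> max 0 \<beta> + \<alpha> * real (K * K)"
      using competitive_ratio_ge_half_minus_migration_budget[OF assms(3) _ _ _
          assms(4)[rule_format]] assms(1)
      unfolding K_def by simp
    then show False using migration_budget_below_half[OF assms(1,2) \<beta> K_def] by linarith
  qed
qed

end
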